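(* For every integer $d\ge 2$, $\mathcal Q_d$ is dense in $\mathcal C_d$.
   Context: A polynomial knot is a map $\phi:\mathbb R\to\mathbb R^3$ with real polynomial components which is a smooth embedding ($\phi$ injective and $\phi'(t)\ne0$ for all $t$). For $d\ge2$, $\mathcal A_d$ is the set of polynomial maps $t\mapsto(f(t),g(t),h(t))$ with $\deg f\le d-2$, $\deg g\le d-1$, $\deg h\le d$, topologized via the bijection with Euclidean $\mathbb R^{3d}$ sending $(f,g,h)$ to its coefficient vector $(a_0,\dots,a_{d-2},b_0,\dots,b_{d-1},c_0,\dots,c_d)$, where $f=\sum a_it^i$, $g=\sum b_it^i$, $h=\sum c_it^i$. $\mathcal C_d\subseteq\mathcal A_d$ is the subspace of maps with $\deg f=d-2$, $\deg g=d-1$, $\deg h=d$ exactly, and $\mathcal Q_d$ is the set of polynomial knots in $\mathcal C_d$. *)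

theory Defs
  imports "HOL-Analysis.Analysis" "HOL-Computational_Algebra.Polynomial"
begin

type_synonym pmap = "real poly \<times> real poly \<times> real poly"

definition pcurve :: "pmap \<Rightarrow> real \<Rightarrow> real \<times> real \<times> real" where
  "pcurve \<phi> t = (case \<phi> of (f, g, h) \<Rightarrow> (poly f t, poly g t, poly h t))"

definition poly_knot :: "pmap \<Rightarrow> bool" where
  "poly_knot \<phi> = (case \<phi> of (f, g, h) \<Rightarrow>
      inj (pcurve \<phi>) \<and>
      (\<forall>t. (poly (pderiv f) t, poly (pderiv g) t, poly (pderiv h) t) \<noteq> (0, 0, 0)))"

definition A_space :: "nat \<Rightarrow> pmap set" where
  "A_space d = {(f, g, h). degree f \<le> d - 2 \<and> degree g \<le> d - 1 \<and> degree h \<le> d}"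

text \<open>Exact degrees; a polynomial of exact degree 0 is a nonzero constant.\<close>
definition C_space :: "nat \<Rightarrow> pmap set" where
  "C_space d = {(f, g, h). f \<noteq> 0 \<and> g \<noteq> 0 \<and> h \<noteq> 0 \<and>
       degree f = d - 2 \<and> degree g = d - 1 \<and> degree h = d}"

definition Q_space :: "nat \<Rightarrow> pmap set" where
  "Q_space d = {\<phi> \<in> C_space d. poly_knot \<phi>}"

text \<open>Euclidean distance of coefficient vectors in R^(3d) (coefficients beyond the
  degree bounds vanish on A_d, so summing up to d is harmless).\<close>
definition coeff_dist :: "nat \<Rightarrow> pmap \<Rightarrow> pmap \<Rightarrow> real" where
  "coeff_dist d \<phi> \<psi> = (case \<phi> of (f, g, h) \<Rightarrow> case \<psi> of (f', g', h') \<Rightarrow>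
      sqrt ((\<Sum>i\<le>d-2. (coeff f i - coeff f' i)^2) + (\<Sum>i\<le>d-1. (coeff g i - coeff g' i)^2)
          + (\<Sum>i\<le>d. (coeff h i - coeff h' i)^2)))"

end

theory Submission
  imports Defs
begin

text \<open>Subtracting \<open>t v\<close> from a curve changes only the linear coefficients, and by exactly \<open>v\<close>.
  The perturbed curve fails to be injective only if \<open>v\<close> is a secant direction
  \<open>(\<phi> s - \<phi> t) / (s - t)\<close>, and fails to be regular only if \<open>v\<close> is a velocity vector \<open>\<phi>' t\<close>.
  These sets are smooth images of \<open>\<real>\<^sup>2\<close> and \<open>\<real>\<close> in \<open>\<real>\<^sup>3\<close>, hence negligible, so arbitrarily
  small admissible \<open>v\<close> exist. For \<open>d \<ge> 4\<close> the perturbation keeps the exact degrees; for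
  \<open>d \<le> 3\<close> one of the first two components is linear and every curve is already a knot.\<close>

lemma degree_one_linear_form:
  fixes p :: "real poly"
  assumes "degree p = 1"
  obtains a b where "p = [:a, b:]" "b \<noteq> 0"
proof
  show "p = [:coeff p 0, coeff p 1:]"
    using assms by (auto simp: poly_eq_iff coeff_pCons coeff_eq_0 split: nat.split)
  show "coeff p 1 \<noteq> 0"
    using assms by (metis leading_coeff_0_iff one_neq_zero degree_0)
qed

lemma degree_one_poly_inj:
  fixes p :: "real poly"
  assumes "degree p = 1"
  shows "inj (poly p)"
proof -
  obtain a b where "p = [:a, b:]" "b \<noteq> 0"
    using degree_one_linear_form[OF assms] .
  then show ?thesis by (auto intro!: injI)
qed

lemma degree_one_pderiv_nonzero:
  fixes p :: "real poly"
  assumes "degree p = 1"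
  shows "poly (pderiv p) t \<noteq> 0"
proof -
  obtain a b where "p = [:a, b:]" "b \<noteq> 0"
    using degree_one_linear_form[OF assms] .
  then show ?thesis by (simp add: pderiv_pCons)
qed

lemma poly_knot_if_degree_one:
  assumes "degree f = 1 \<or> degree g = 1"
  shows "poly_knot (f, g, h)"
proof -
  have "inj (pcurve (f, g, h))"
  proof (rule injI)
    fix s t assume "pcurve (f, g, h) s = pcurve (f, g, h) t"
    then have "poly f s = poly f t" "poly g s = poly g t" by (auto simp: pcurve_def)
    then show "s = t" using assms degree_one_poly_inj[of f] degree_one_poly_inj[of g]
      by (auto dest: injD)
  qed
  then show ?thesis
    using assms degree_one_pderiv_nonzero[of f] degree_one_pderiv_nonzero[of g]
    by (auto simp: poly_knot_def)
qed

definition velocity :: "pmap \<Rightarrow> real \<Rightarrow> real \<times> real \<times> real" where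
  "velocity \<phi> t = (case \<phi> of (f, g, h) \<Rightarrow> (poly (pderiv f) t, poly (pderiv g) t, poly (pderiv h) t))"

definition secant_directions :: "pmap \<Rightarrow> (real \<times> real \<times> real) set" where
  "secant_directions \<phi> = (\<lambda>x. (pcurve \<phi> (fst x) - pcurve \<phi> (snd x)) /\<^sub>R (fst x - snd x)) `
     {x. fst x \<noteq> snd x}"

lemma poly_knot_iff: "poly_knot \<phi> \<longleftrightarrow> inj (pcurve \<phi>) \<and> (\<forall>t. velocity \<phi> t \<noteq> 0)"
  by (cases \<phi>) (simp add: poly_knot_def velocity_def zero_prod_def)

lemma pcurve_differentiable: "pcurve \<phi> differentiable at t"
  by (cases \<phi>) (auto simp: pcurve_def[abs_def] intro!: differentiable_Pair poly_differentiable)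

lemma negligible_secant_directions: "negligible (secant_directions \<phi>)"
  unfolding secant_directions_def
proof (rule negligible_differentiable_image_lowdim)
  have "(\<lambda>x. (pcurve \<phi> (fst x) - pcurve \<phi> (snd x)) /\<^sub>R (fst x - snd x)) differentiable at x"
    if "fst x \<noteq> snd x" for x :: "real \<times> real"
  proof (rule differentiable_scaleR)
    have "(\<lambda>x. fst x - snd x) differentiable at x"
      by (simp add: differentiable_diff bounded_linear_imp_differentiable bounded_linear_fst
          bounded_linear_snd)
    then show "(\<lambda>x. inverse (fst x - snd x)) differentiable at x"
      by (rule differentiable_inverse) (simp add: that)
    show "(\<lambda>x. pcurve \<phi> (fst x) - pcurve \<phi> (snd x)) differentiable at x"
      using differentiable_compose[of "pcurve \<phi>" fst x UNIV]
        differentiable_compose[of "pcurve \<phi>" snd x UNIV] pcurve_differentiable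
      by (simp add: o_def differentiable_diff bounded_linear_imp_differentiable
          bounded_linear_fst bounded_linear_snd)
  qed
  then show "(\<lambda>x. (pcurve \<phi> (fst x) - pcurve \<phi> (snd x)) /\<^sub>R (fst x - snd x))
      differentiable_on {x. fst x \<noteq> snd x}"
    by (intro differentiable_at_imp_differentiable_on) simp
qed simp

lemma velocity_differentiable: "velocity \<phi> differentiable at t"
  by (cases \<phi>) (auto simp: velocity_def[abs_def] intro!: differentiable_Pair poly_differentiable)

lemma negligible_velocities: "negligible (range (velocity \<phi>))"
  by (rule negligible_differentiable_image_lowdim)
    (simp_all add: differentiable_at_imp_differentiable_on velocity_differentiable)

definition tilt :: "pmap \<Rightarrow> real \<times> real \<times> real \<Rightarrow> pmap" where
  "tilt \<phi> v = (case \<phi> of (f, g, h) \<Rightarrow> case v of (a, b, c) \<Rightarrow>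
     (f - [:0, a:], g - [:0, b:], h - [:0, c:]))"

lemma pcurve_tilt: "pcurve (tilt \<phi> v) t = pcurve \<phi> t - t *\<^sub>R v"
  by (cases \<phi>; cases v) (simp add: tilt_def pcurve_def mult.commute)

lemma velocity_tilt: "velocity (tilt \<phi> v) t = velocity \<phi> t - v"
  by (cases \<phi>; cases v) (simp add: tilt_def velocity_def pderiv_diff pderiv_pCons)

lemma poly_knot_tilt:
  assumes "v \<notin> secant_directions \<phi>" "v \<notin> range (velocity \<phi>)"
  shows "poly_knot (tilt \<phi> v)"
  unfolding poly_knot_iff
proof
  show "inj (pcurve (tilt \<phi> v))"
  proof (rule injI, rule ccontr)
    fix s t assume "pcurve (tilt \<phi> v) s = pcurve (tilt \<phi> v) t" "s \<noteq> t"
    then have "pcurve \<phi> s - pcurve \<phi> t = (s - t) *\<^sub>R v"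
      by (simp add: pcurve_tilt algebra_simps)
    with \<open>s \<noteq> t\<close> have "v = (pcurve \<phi> s - pcurve \<phi> t) /\<^sub>R (s - t)"
      by simp
    with \<open>s \<noteq> t\<close> have "v \<in> secant_directions \<phi>"
      unfolding secant_directions_def by (auto intro!: image_eqI[of _ _ "(s, t)"])
    with assms(1) show False ..
  qed
  show "\<forall>t. velocity (tilt \<phi> v) t \<noteq> 0"
    using assms(2) by (auto simp: velocity_tilt)
qed

lemma degree_diff_linear:
  fixes p :: "real poly"
  assumes "degree p \<ge> 2"
  shows "degree (p - [:0, a:]) = degree p"
proof -
  have "degree (- [:0, a:]) < degree p"
    using assms by (simp add: degree_pCons_eq_if)
  then show ?thesis
    unfolding diff_conv_add_uminus by (rule degree_add_eq_left)
qed

lemma tilt_C_space: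
  assumes "d \<ge> 4" "\<phi> \<in> C_space d"
  shows "tilt \<phi> v \<in> C_space d"
  using assms degree_diff_linear
  by (cases \<phi>; cases v) (auto simp: C_space_def tilt_def simp del: diff_0_right)

lemma sum_sq_coeff_linear_monom:
  fixes a :: real
  assumes "n \<ge> 1"
  shows "(\<Sum>i\<le>n. (coeff [:0, a:] i)^2) = a^2"
proof -
  have "(\<Sum>i\<le>n. (coeff [:0, a:] i)^2) = (\<Sum>i\<le>n. if i = 1 then a^2 else 0)"
    by (intro sum.cong) (auto simp: coeff_pCons split: nat.split)
  also have "\<dots> = a^2" using assms by simp
  finally show ?thesis .
qed

lemma coeff_dist_tilt:
  assumes "d \<ge> 3"
  shows "coeff_dist d \<phi> (tilt \<phi> v) = norm v"
  using assms
  by (cases \<phi>; cases v) (simp add: coeff_dist_def tilt_def sum_sq_coeff_linear_monom norm_Pair)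

lemma exists_small_outside_negligible:
  fixes N :: "'a::euclidean_space set"
  assumes "negligible N" "\<epsilon> > 0"
  shows "\<exists>v. norm v < \<epsilon> \<and> v \<notin> N"
proof -
  have "\<not> ball 0 \<epsilon> \<subseteq> N"
    using assms negligible_subset open_not_negligible[of "ball 0 \<epsilon>"] by auto
  then show ?thesis by auto
qed

theorem mainTheorem12:
  fixes d :: nat
  assumes "d \<ge> 2"
  shows "\<forall>\<phi>\<in>C_space d. \<forall>\<epsilon>>0. \<exists>\<psi>\<in>Q_space d. coeff_dist d \<phi> \<psi> < \<epsilon>"
proof (intro ballI allI impI)
  fix \<phi> and \<epsilon> :: real
  assume \<phi>: "\<phi> \<in> C_space d" and "\<epsilon> > 0"
  show "\<exists>\<psi>\<in>Q_space d. coeff_dist d \<phi> \<psi> < \<epsilon>"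
  proof (cases "d \<le> 3")
    case True
    with \<phi> assms have "\<phi> \<in> Q_space d"
      by (auto simp: C_space_def Q_space_def intro!: poly_knot_if_degree_one)
    moreover have "coeff_dist d \<phi> \<phi> = 0"
      by (cases \<phi>) (simp add: coeff_dist_def)
    ultimately show ?thesis using \<open>\<epsilon> > 0\<close> by force
  next
    case False
    have "negligible (secant_directions \<phi> \<union> range (velocity \<phi>))"
      using negligible_secant_directions negligible_velocities by simp
    then obtain v where "norm v < \<epsilon>" "v \<notin> secant_directions \<phi>" "v \<notin> range (velocity \<phi>)"
      using exists_small_outside_negligible \<open>\<epsilon> > 0\<close> by blast
    then have "tilt \<phi> v \<in> Q_space d" "coeff_dist d \<phi> (tilt \<phi> v) < \<epsilon>"
      using False \<phi> by (auto simp: Q_space_def tilt_C_space poly_knot_tilt coeff_dist_tilt)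
    then show ?thesis ..
  qed
qed

end
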